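(* Let $T=(V,E)$ be a binary $X$-tree and $x_1\neq x_2$ elements of $X$. If $P_{x_1}(T)\cap P_{x_2}(T)\neq\emptyset$, then every interior vertex of $T$ lies on the path from $x_1$ to $x_2$ in $T$ (so $T$ is a caterpillar tree with $x_1,x_2$ at opposite ends).
   Context: Let $X$ be a finite set with $|X|=n\ge 3$. A binary $X$-tree is a finite tree $T=(V,E)$ whose degree-1 vertices are exactly the elements of $X$ and all of whose other (interior) vertices have degree $3$. A cord is a $2$-subset $\{y,z\}$ of $X$, written $yz$. For $x\in X$, $P_x(T)$ is the collection of all sets of the form $\{ax: a\in X-\{x\}\}\cup\{y_vz_v: v\in V-X\}$, where for each interior vertex $v$, $y_v$ and $z_v$ are leaves chosen from the two distinct connected components of $T-v$ that do not contain $x$ (one from each). A caterpillar tree is a binary $X$-tree all of whose interior vertices lie on a single path. *)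

theory Defs
  imports Main
begin

definition walk_in :: "'a set \<Rightarrow> 'a set set \<Rightarrow> 'a list \<Rightarrow> bool" where
  "walk_in U E p \<longleftrightarrow> p \<noteq> [] \<and> set p \<subseteq> U \<and>
     (\<forall>i. Suc i < length p \<longrightarrow> {p ! i, p ! Suc i} \<in> E)"

definition reach :: "'a set \<Rightarrow> 'a set set \<Rightarrow> 'a \<Rightarrow> 'a \<Rightarrow> bool" where
  "reach U E a b \<longleftrightarrow> (\<exists>p. walk_in U E p \<and> hd p = a \<and> last p = b)"

definition is_cycle :: "'a set \<Rightarrow> 'a set set \<Rightarrow> 'a list \<Rightarrow> bool" where
  "is_cycle V E c \<longleftrightarrow> walk_in V E c \<and> distinct c \<and> length c \<ge> 3 \<and> {last c, hd c} \<in> E"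

definition is_tree :: "'a set \<Rightarrow> 'a set set \<Rightarrow> bool" where
  "is_tree V E \<longleftrightarrow> finite V \<and> V \<noteq> {} \<and> (\<forall>e\<in>E. e \<subseteq> V \<and> card e = 2) \<and>
     (\<forall>a\<in>V. \<forall>b\<in>V. reach V E a b) \<and> \<not> (\<exists>c. is_cycle V E c)"

definition degree :: "'a set set \<Rightarrow> 'a \<Rightarrow> nat" where
  "degree E v = card {e\<in>E. v \<in> e}"

definition binary_X_tree :: "'a set \<Rightarrow> 'a set \<Rightarrow> 'a set set \<Rightarrow> bool" where
  "binary_X_tree X V E \<longleftrightarrow> is_tree V E \<and> X \<subseteq> V \<and>
     (\<forall>v\<in>V. degree E v = 1 \<longleftrightarrow> v \<in> X) \<and> (\<forall>v\<in>V - X. degree E v = 3)"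

definition reach_minus :: "'a set \<Rightarrow> 'a set set \<Rightarrow> 'a \<Rightarrow> 'a \<Rightarrow> 'a \<Rightarrow> bool" where
  "reach_minus V E v a b = reach (V - {v}) {e\<in>E. v \<notin> e} a b"

text \<open>y, z are leaves lying in the two distinct components of T - v not containing x,
  one from each.\<close>
definition valid_pair :: "'a set \<Rightarrow> 'a set \<Rightarrow> 'a set set \<Rightarrow> 'a \<Rightarrow> 'a \<Rightarrow> 'a \<Rightarrow> 'a \<Rightarrow> bool" where
  "valid_pair X V E x v y z \<longleftrightarrow> y \<in> X \<and> z \<in> X \<and>
     \<not> reach_minus V E v x y \<and> \<not> reach_minus V E v x z \<and> \<not> reach_minus V E v y z"

definition P_set :: "'a set \<Rightarrow> 'a set \<Rightarrow> 'a set set \<Rightarrow> 'a \<Rightarrow> 'a set set set" where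
  "P_set X V E x = {S. \<exists>f g. (\<forall>v\<in>V - X. valid_pair X V E x v (f v) (g v)) \<and>
      S = {{a, x} | a. a \<in> X - {x}} \<union> {{f v, g v} | v. v \<in> V - X}}"

definition on_path :: "'a set \<Rightarrow> 'a set set \<Rightarrow> 'a \<Rightarrow> 'a \<Rightarrow> 'a \<Rightarrow> bool" where
  "on_path V E a b w \<longleftrightarrow> (\<exists>p. walk_in V E p \<and> distinct p \<and> hd p = a \<and> last p = b \<and> w \<in> set p)"

end

theory Submission
  imports Defs
begin

text \<open>
  Suppose an interior vertex v is off the path from x1 to x2, so that x1 and x2 lie in the same
  component of T - v, and let S lie in both P_x1(T) and P_x2(T). Read as a member of P_x1(T),
  S contains a cord yz for v, where x1, y, z lie in three different components of T - v.
  Read as a member of P_x2(T), S contains the cords yx2 and zx2; as they avoid x1, they are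
  the cords of interior vertices w and w' separating x1, y, x2 resp. x1, z, x2 pairwise.
  Locating w in T - v shows that w separates x1, z, x2 pairwise as well. In a connected graph
  at most one vertex separates three given vertices pairwise, so w = w', whence yx2 = zx2 and
  y = z, a contradiction. Only the connectedness of T enters the argument.
\<close>

lemma walk_in_Nil [simp]: "\<not> walk_in U E []"
  by (simp add: walk_in_def)

lemma walk_in_singleton [simp]: "walk_in U E [a] \<longleftrightarrow> a \<in> U"
  by (simp add: walk_in_def)

lemma walk_in_Cons_Cons [simp]:
  "walk_in U E (a # b # r) \<longleftrightarrow> a \<in> U \<and> {a, b} \<in> E \<and> walk_in U E (b # r)"
proof
  assume walk: "walk_in U E (a # b # r)"
  have "{(b # r) ! i, (b # r) ! Suc i} \<in> E" if "Suc i < length (b # r)" for i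
    using walk that unfolding walk_in_def by (metis Suc_less_eq length_Cons nth_Cons_Suc)
  with walk show "a \<in> U \<and> {a, b} \<in> E \<and> walk_in U E (b # r)"
    unfolding walk_in_def by fastforce
next
  assume "a \<in> U \<and> {a, b} \<in> E \<and> walk_in U E (b # r)"
  then show "walk_in U E (a # b # r)"
    unfolding walk_in_def by (auto simp: less_Suc_eq_0_disj)
qed

lemma walk_in_set: "walk_in U E p \<Longrightarrow> set p \<subseteq> U"
  by (simp add: walk_in_def)

lemma walk_in_append:
  "walk_in U E xs \<Longrightarrow> walk_in U E ys \<Longrightarrow> last xs = hd ys \<Longrightarrow> walk_in U E (xs @ tl ys)"
  by (induction xs rule: induct_list012) (cases ys; auto)+

lemma walk_in_rev: "walk_in U E p \<Longrightarrow> walk_in U E (rev p)"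
proof (induction p rule: induct_list012)
  case (3 a b r)
  then have "walk_in U E (rev (b # r) @ tl [b, a])"
    by (intro walk_in_append) (auto simp: insert_commute dest: walk_in_set)
  then show ?case by simp
qed simp_all

lemma walk_in_appendD1: "walk_in U E (xs @ ys) \<Longrightarrow> xs \<noteq> [] \<Longrightarrow> walk_in U E xs"
  by (induction xs rule: induct_list012) (cases ys; auto)+

lemma walk_in_appendD2: "walk_in U E (xs @ ys) \<Longrightarrow> ys \<noteq> [] \<Longrightarrow> walk_in U E ys"
  by (induction xs rule: induct_list012) (cases ys; auto)+

lemma walk_in_avoiding:
  "walk_in U E p \<Longrightarrow> v \<notin> set p \<Longrightarrow> walk_in (U - {v}) {e\<in>E. v \<notin> e} p"
  by (induction p rule: induct_list012) auto

lemma walk_in_distinct: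
  assumes "walk_in U E p"
  obtains q where "walk_in U E q" "distinct q" "hd q = hd p" "last q = last p" "set q \<subseteq> set p"
  using assms
proof (induction p arbitrary: thesis rule: induct_list012)
  case (3 a b r)
  then obtain q where q: "walk_in U E q" "distinct q" "hd q = b" "last q = last (b # r)"
    "set q \<subseteq> set (b # r)"
    by auto
  show ?case
  proof (cases "a \<in> set q")
    case True
    then obtain q1 q2 where "q = q1 @ a # q2" by (meson split_list)
    with q show ?thesis by (intro "3.prems"(1)[of "a # q2"]) (auto dest: walk_in_appendD2)
  next
    case False
    with q "3.prems"(2) show ?thesis
      by (intro "3.prems"(1)[of "a # q"]) (cases q; auto)+
  qed
next
  case (2 a)
  then show ?case by (intro "2.prems"(1)[of "[a]"]) auto
qed simp

lemma reach_refl: "a \<in> U \<Longrightarrow> reach U E a a"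
  unfolding reach_def by (intro exI[of _ "[a]"]) simp

lemma reach_sym: "reach U E a b \<Longrightarrow> reach U E b a"
  unfolding reach_def by (metis hd_rev last_rev walk_in_rev)

lemma reach_trans: "reach U E a b \<Longrightarrow> reach U E b c \<Longrightarrow> reach U E a c"
  unfolding reach_def
proof (elim exE conjE)
  fix p q
  assume p: "walk_in U E p" "hd p = a" "last p = b"
    and q: "walk_in U E q" "hd q = b" "last q = c"
  have "walk_in U E (p @ tl q)" using walk_in_append[OF p(1) q(1)] p(3) q(2) by simp
  moreover have "hd (p @ tl q) = a" "last (p @ tl q) = c"
    using p q by (cases p; cases q; auto)+
  ultimately show "\<exists>r. walk_in U E r \<and> hd r = a \<and> last r = c" by blast
qed

lemma reach_minus_refl: "a \<in> V \<Longrightarrow> a \<noteq> v \<Longrightarrow> reach_minus V E v a a"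
  unfolding reach_minus_def by (simp add: reach_refl)

lemma reach_minus_sym: "reach_minus V E v a b \<Longrightarrow> reach_minus V E v b a"
  unfolding reach_minus_def by (rule reach_sym)

lemma reach_minus_trans:
  "reach_minus V E v a b \<Longrightarrow> reach_minus V E v b c \<Longrightarrow> reach_minus V E v a c"
  unfolding reach_minus_def by (rule reach_trans)

definition separates_pairwise :: "'a set \<Rightarrow> 'a set set \<Rightarrow> 'a \<Rightarrow> 'a \<Rightarrow> 'a \<Rightarrow> 'a \<Rightarrow> bool" where
  "separates_pairwise V E v a b c \<longleftrightarrow>
     \<not> reach_minus V E v a b \<and> \<not> reach_minus V E v a c \<and> \<not> reach_minus V E v b c"

lemma valid_pair_iff:
  "valid_pair X V E x v y z \<longleftrightarrow> y \<in> X \<and> z \<in> X \<and> separates_pairwise V E v x y z"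
  by (auto simp: valid_pair_def separates_pairwise_def)

lemma separates_pairwise_swap:
  "separates_pairwise V E v a b c \<Longrightarrow> separates_pairwise V E v a c b"
  unfolding separates_pairwise_def by (blast dest: reach_minus_sym)

lemma separates_pairwise_distinct:
  "separates_pairwise V E v a b c \<Longrightarrow> {a, b, c} \<subseteq> V - {v} \<Longrightarrow> distinct [a, b, c]"
  unfolding separates_pairwise_def by (auto dest: reach_minus_refl)

lemma reach_minus_to_separator:
  assumes conn: "\<forall>a\<in>V. \<forall>b\<in>V. reach V E a b"
    and "p \<in> V" "c \<in> V" "d \<in> V" "p \<noteq> c" "d \<noteq> c"
    and separated: "\<not> reach_minus V E c p d"
  shows "reach_minus V E d p c"
proof -
  obtain q where q: "walk_in V E q" "hd q = p" "last q = c"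
    using conn assms unfolding reach_def by blast
  then have "c \<in> set q" by (metis last_in_set walk_in_Nil)
  then obtain ys zs where q_split: "q = ys @ c # zs" "c \<notin> set ys" by (meson split_list_first)
  with q \<open>p \<noteq> c\<close> have "ys \<noteq> []" "hd ys = p" by (cases ys; auto)+
  have walk: "walk_in V E (ys @ [c])"
    using q(1) q_split walk_in_appendD1[of V E "ys @ [c]" zs] by simp
  have "d \<notin> set ys"
  proof
    assume "d \<in> set ys"
    then obtain us ts where ys_split: "ys = us @ d # ts" by (meson split_list)
    then have "walk_in V E (us @ [d])"
      using walk walk_in_appendD1[of V E "us @ [d]" "ts @ [c]"] by simp
    then have "walk_in (V - {c}) {e\<in>E. c \<notin> e} (us @ [d])"
      using ys_split q_split by (intro walk_in_avoiding) auto
    moreover have "hd (us @ [d]) = p" using \<open>hd ys = p\<close> ys_split by (cases us) auto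
    ultimately show False
      using separated unfolding reach_minus_def reach_def by fastforce
  qed
  with \<open>d \<noteq> c\<close> have "walk_in (V - {d}) {e\<in>E. d \<notin> e} (ys @ [c])"
    by (intro walk_in_avoiding[OF walk]) auto
  with \<open>ys \<noteq> []\<close> \<open>hd ys = p\<close> show ?thesis
    unfolding reach_minus_def reach_def by (intro exI[of _ "ys @ [c]"]) simp
qed

lemma reach_minus_if_separated_from:
  assumes "\<forall>a\<in>V. \<forall>b\<in>V. reach V E a b"
    and "{p, q, c, d} \<subseteq> V" "c \<notin> {p, q, d}"
    and "\<not> reach_minus V E c p d" "\<not> reach_minus V E c q d"
  shows "reach_minus V E d p q"
proof -
  have "reach_minus V E d p c" "reach_minus V E d q c"
    using assms by (auto intro: reach_minus_to_separator)
  then show ?thesis by (blast intro: reach_minus_trans reach_minus_sym)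
qed

lemma separates_pairwise_unique:
  assumes conn: "\<forall>a\<in>V. \<forall>b\<in>V. reach V E a b"
    and "{a, b, e, c, d} \<subseteq> V" "c \<notin> {a, b, e}" "d \<notin> {a, b, e}"
    and c: "separates_pairwise V E c a b e" and d: "separates_pairwise V E d a b e"
  shows "c = d"
proof (rule ccontr)
  assume "c \<noteq> d"
  have connected_avoiding_d: "reach_minus V E d p q"
    if "{p, q} \<subseteq> {a, b, e}" "\<not> reach_minus V E c p d" "\<not> reach_minus V E c q d" for p q
    using reach_minus_if_separated_from[OF conn, of p q c d] that assms \<open>c \<noteq> d\<close> by auto
  \<comment> \<open>at most one of a, b, e lies in the component of d in T - c\<close>
  have "\<not> reach_minus V E c a d \<or> \<not> reach_minus V E c b d"
    "\<not> reach_minus V E c a d \<or> \<not> reach_minus V E c e d"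
    "\<not> reach_minus V E c b d \<or> \<not> reach_minus V E c e d"
    using c unfolding separates_pairwise_def by (meson reach_minus_sym reach_minus_trans)+
  then show False
    using d connected_avoiding_d unfolding separates_pairwise_def by blast
qed

lemma reach_minus_off_path:
  assumes "\<forall>a\<in>V. \<forall>b\<in>V. reach V E a b" "a \<in> V" "b \<in> V"
    and "\<not> on_path V E a b v"
  shows "reach_minus V E v a b"
proof -
  obtain p where "walk_in V E p" "hd p = a" "last p = b"
    using assms unfolding reach_def by blast
  then obtain q where q: "walk_in V E q" "distinct q" "hd q = a" "last q = b"
    by (metis walk_in_distinct)
  with assms(4) have "v \<notin> set q" unfolding on_path_def by blast
  with q show ?thesis
    unfolding reach_minus_def reach_def by (blast intro: walk_in_avoiding)
qed

lemma separates_pairwise_transfer: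
  assumes conn: "\<forall>a\<in>V. \<forall>b\<in>V. reach V E a b"
    and "{x1, x2, y, z, v, w} \<subseteq> V" "v \<notin> {x1, x2, y, z}" "w \<notin> {x1, x2, y, z}"
    and v: "separates_pairwise V E v x1 y z" "reach_minus V E v x1 x2"
    and w: "separates_pairwise V E w x1 y x2"
  shows "separates_pairwise V E w x1 z x2"
proof -
  have "w \<noteq> v" using v w unfolding separates_pairwise_def by auto
  have separated: "reach_minus V E w p q"
    if "{p, q} \<subseteq> {x1, x2, y, z}" "\<not> reach_minus V E v p w" "\<not> reach_minus V E v q w" for p q
    using reach_minus_if_separated_from[OF conn, of p q v w] that assms \<open>w \<noteq> v\<close> by auto
  \<comment> \<open>w can lie neither in the component of y nor in that of z in T - v\<close>
  have "reach_minus V E w y z"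
  proof (cases "reach_minus V E v y w \<or> reach_minus V E v z w")
    case True
    then have "\<not> reach_minus V E v x1 w \<and> \<not> reach_minus V E v x2 w \<and>
        (\<not> reach_minus V E v y w \<or> \<not> reach_minus V E v z w)"
      using v unfolding separates_pairwise_def by (meson reach_minus_sym reach_minus_trans)
    then have "reach_minus V E w x1 x2 \<or> reach_minus V E w x1 y"
      using separated by blast
    with w show ?thesis unfolding separates_pairwise_def by blast
  next
    case False
    then show ?thesis using separated by blast
  qed
  with w show ?thesis
    unfolding separates_pairwise_def by (meson reach_minus_sym reach_minus_trans)
qed

lemma cord_in_P_set: "S \<in> P_set X V E x \<Longrightarrow> a \<in> X - {x} \<Longrightarrow> {a, x} \<in> S"
  unfolding P_set_def by blast

lemma cord_of_interior_vertex:
  assumes valid: "\<forall>w\<in>V - X. valid_pair X V E x w (f w) (g w)"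
    and cord: "{a, b} \<in> {{c, x} | c. c \<in> X - {x}} \<union> {{f w, g w} | w. w \<in> V - X}"
    and "x \<notin> {a, b}"
  obtains w where "w \<in> V - X" "{f w, g w} = {a, b}" "separates_pairwise V E w x a b"
proof -
  from cord \<open>x \<notin> {a, b}\<close> obtain w where w: "w \<in> V - X" "{f w, g w} = {a, b}"
    by (auto simp: doubleton_eq_iff)
  with valid have "separates_pairwise V E w x (f w) (g w)" by (simp add: valid_pair_iff)
  with w have "separates_pairwise V E w x a b"
    by (auto simp: doubleton_eq_iff dest: separates_pairwise_swap)
  with w that show thesis by blast
qed

theorem mainTheorem5:
  fixes X V :: "'a set" and E :: "'a set set" and x1 x2 :: 'a
  assumes "binary_X_tree X V E" and "card X \<ge> 3"
    and "x1 \<in> X" and "x2 \<in> X" and "x1 \<noteq> x2"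
    and "P_set X V E x1 \<inter> P_set X V E x2 \<noteq> {}"
  shows "\<forall>v\<in>V - X. on_path V E x1 x2 v"
proof (intro ballI, rule ccontr)
  fix v assume v: "v \<in> V - X" and off_path: "\<not> on_path V E x1 x2 v"
  have conn: "\<forall>a\<in>V. \<forall>b\<in>V. reach V E a b" and "X \<subseteq> V"
    using assms(1) unfolding binary_X_tree_def is_tree_def by auto
  obtain S where S: "S \<in> P_set X V E x1" "S \<in> P_set X V E x2" using assms(6) by blast
  obtain f g where fg: "\<forall>w\<in>V - X. valid_pair X V E x1 w (f w) (g w)"
    and S_eq: "S = {{a, x1} | a. a \<in> X - {x1}} \<union> {{f w, g w} | w. w \<in> V - X}"
    using S(1) unfolding P_set_def by blast
  define y z where "y = f v" and "z = g v"
  have "y \<in> X" "z \<in> X" and v_sep: "separates_pairwise V E v x1 y z"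
    using fg v by (auto simp: valid_pair_iff y_def z_def)
  have "reach_minus V E v x1 x2"
    using reach_minus_off_path[OF conn _ _ off_path] assms(3,4) \<open>X \<subseteq> V\<close> by blast
  with v_sep have "y \<noteq> x2" "z \<noteq> x2" unfolding separates_pairwise_def by auto
  have "x1 \<noteq> y" "x1 \<noteq> z" "y \<noteq> z"
    using separates_pairwise_distinct[OF v_sep] v assms(3) \<open>y \<in> X\<close> \<open>z \<in> X\<close> \<open>X \<subseteq> V\<close>
    by auto
  have cord: "{a, x2} \<in> {{c, x1} | c. c \<in> X - {x1}} \<union> {{f w, g w} | w. w \<in> V - X}"
    if "a \<in> X" "a \<noteq> x2" for a
    using cord_in_P_set[OF S(2)] that S_eq by blast
  obtain w where w: "w \<in> V - X" "{f w, g w} = {y, x2}" "separates_pairwise V E w x1 y x2"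
    using cord_of_interior_vertex[OF fg cord] \<open>y \<in> X\<close> \<open>y \<noteq> x2\<close> \<open>x1 \<noteq> y\<close> assms(5)
    by blast
  obtain w' where w': "w' \<in> V - X" "{f w', g w'} = {z, x2}" "separates_pairwise V E w' x1 z x2"
    using cord_of_interior_vertex[OF fg cord] \<open>z \<in> X\<close> \<open>z \<noteq> x2\<close> \<open>x1 \<noteq> z\<close> assms(5)
    by blast
  have "separates_pairwise V E w x1 z x2"
    using separates_pairwise_transfer[OF conn _ _ _ v_sep \<open>reach_minus V E v x1 x2\<close> w(3)]
      v w(1) assms(3,4) \<open>y \<in> X\<close> \<open>z \<in> X\<close> \<open>X \<subseteq> V\<close> by blast
  then have "w = w'"
    using separates_pairwise_unique[OF conn _ _ _ _ w'(3)] w(1) w'(1) assms(3,4) \<open>z \<in> X\<close> \<open>X \<subseteq> V\<close>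
    by blast
  with w w' have "{y, x2} = {z, x2}" by simp
  with \<open>y \<noteq> z\<close> \<open>y \<noteq> x2\<close> show False by (auto simp: doubleton_eq_iff)
qed

end
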